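(* Under the setting described in the context, let $j\in J$ and let $U_j^\ell\in\mathbb{F}_h^\ell$ be a lifted discrete eigenfunction associated with $\Lambda_j$ such that $\|U_j^\ell\|_m=1$. Then $$|\lambda_j-\Lambda_j|\le\|\mathcal{P}_mU_j^\ell-U_j^\ell\|_a^2+\lambda_j\|\mathcal{P}_mU_j^\ell-U_j^\ell\|_m^2+|(a_h^\ell-a)(U_j^\ell,U_j^\ell)|+\Lambda_j|(m_h^\ell-m)(U_j^\ell,U_j^\ell)|.$$
   Context: Let $d\in\{2,3\}$ and $\Omega\subset\mathbb{R}^d$ a nonempty bounded connected open set with smooth boundary $\Gamma=\partial\Omega$; fix integers $r\ge1$, $k\ge1$; $\Omega$ is at least $C^{r+2}$ and $C^{k+1}$ regular. $H^1(\Omega,\Gamma)=\{u\in H^1(\Omega):u|_\Gamma\in H^1(\Gamma)\}$; $\nabla_\Gamma$ is the tangential gradient; $b(x)=x-\mathrm{d}(x)\nabla\mathrm{d}(x)$, $\mathrm{d}$ the signed distance to $\Gamma$, is the orthogonal projection onto $\Gamma$ near $\Gamma$. Continuous problem: $a(u,v)=\int_\Omega\nabla u\cdot\nabla v\,dx+\int_\Gamma\nabla_\Gamma u\cdot\nabla_\Gamma v\,ds+\int_\Gamma uv\,ds$, $m(u,v)=\int_\Omega uv\,dx$, $\|u\|_a=a(u,u)^{1/2}$, $\|u\|_m=m(u,u)^{1/2}$; eigenpairs $(\lambda_n,u_n)$, $a(u_n,v)=\lambda_nm(u_n,v)$ for all $v\in H^1(\Omega,\Gamma)$, eigenvalues increasing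 with multiplicity. Fix $\lambda_i$ of multiplicity $N$, $J=\{i,\dots,i+N-1\}$, $\lambda_j=\lambda_i$ for $j\in J$, $E_{\lambda_i}$ its eigenspace; $\mathcal{P}_m$ is the $m$-orthogonal projection onto $E_{\lambda_i}$. Meshes and lift: $\mathcal{T}_h^{(1)}$ quasi-uniform simplicial meshes of size $h$ with boundary vertices on $\Gamma$, $T=F_T(\hat T)$ with $F_T$ affine. For $T$ with at least two vertices on $\Gamma$ (barycentric coordinates $\lambda_l$, vertices $\hat v_l$ of $\hat T$, $\varepsilon_l=1$ iff $F_T(\hat v_l)\in\Gamma$, $\lambda^*=\sum\varepsilon_l\lambda_l$, $\hat\sigma=\{\lambda^*=0\}$, $\hat y=\frac1{\lambda^*}\sum\varepsilon_l\lambda_l\hat v_l$): $F_T^{(e)}=F_T$ on $\hat\sigma$, $F_T^{(e)}(\hat x)=F_T(\hat x)+(\lambda^* )^{r+2}(b(F_T(\hat y))-F_T(\hat y))$ otherwise; else $F_T^{(e)}=F_T$. $F_T^{(r)}$ is the $\mathbb{P}^r$-Lagrange interpolant of $F_T^{(e)}$, $T^{(r)}=F_T^{(r)}(\hat T)$, $\Omega_h=\bigcup T^{(r)}$, $\Gamma_h=\partial\Omega_h$. $G_h:\Omega_h\to\Omega$ equals $F^{(e)}_{T^{(r)}}\circ(F_T^{(r)})^{-1}$ on $T^{(r)}$ (formula of $F_T^{(e)}$ with $F_T$ replaced by $F_T^{(r)}$); continuous, elementwise $C^1$-diffeomorphism, $G_h|_{\Gamma_h}=b$. Lift: $v^\ell\circ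 G_h=v$. Discrete: $\mathbb{V}_h=\{\chi\in C^0(\Omega_h):\chi|_{T^{(r)}}\circ F_T^{(r)}\in\mathbb{P}^k(\hat T)\}$, $\mathbb{V}_h^\ell$ its lifts; $a_h(U,V)=\int_{\Omega_h}\nabla U\cdot\nabla V+\int_{\Gamma_h}\nabla_{\Gamma_h}U\cdot\nabla_{\Gamma_h}V+\int_{\Gamma_h}UV$, $m_h(U,V)=\int_{\Omega_h}UV$; for $v,w\in H^1(\Omega,\Gamma)$, $a_h^\ell(v,w)=a_h(v\circ G_h,w\circ G_h)$, $m_h^\ell(v,w)=m_h(v\circ G_h,w\circ G_h)$. Discrete eigenpairs $(\Lambda_p,U_p)$: $a_h(U_p,V)=\Lambda_pm_h(U_p,V)$ for all $V\in\mathbb{V}_h$, eigenvalues increasing. $\mathbb{F}_h^\ell=\mathrm{span}\{U_j^\ell:j\in J\}$. *)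

theory Defs
  imports "HOL-Analysis.Analysis"
begin

text \<open>Abstract (Hilbert-space level) rendering of the eigenvalue setting.
  Elements of H^1(Omega,Gamma) live in a real vector space of type 'v,
  elements of the discrete space V_h (functions on Omega_h) in a real vector
  space of type 'w.\<close>

definition sym_bilinear_on :: "'a::real_vector set \<Rightarrow> ('a \<Rightarrow> 'a \<Rightarrow> real) \<Rightarrow> bool" where
  "sym_bilinear_on S b \<longleftrightarrow>
     (\<forall>x\<in>S. \<forall>y\<in>S. \<forall>z\<in>S. b (x + y) z = b x z + b y z) \<and>
     (\<forall>x\<in>S. \<forall>z\<in>S. \<forall>c. b (c *\<^sub>R x) z = c * b x z) \<and>
     (\<forall>x\<in>S. \<forall>y\<in>S. b x y = b y x)"

definition pos_def_on :: "'a::real_vector set \<Rightarrow> ('a \<Rightarrow> 'a \<Rightarrow> real) \<Rightarrow> bool" where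
  "pos_def_on S b \<longleftrightarrow> (\<forall>x\<in>S. x \<noteq> 0 \<longrightarrow> b x x > 0)"

definition bnorm :: "('a \<Rightarrow> 'a \<Rightarrow> real) \<Rightarrow> 'a \<Rightarrow> real" where
  "bnorm b u = sqrt (b u u)"

definition eigenspace_of :: "'a set \<Rightarrow> ('a \<Rightarrow> 'a \<Rightarrow> real) \<Rightarrow> ('a \<Rightarrow> 'a \<Rightarrow> real) \<Rightarrow> real \<Rightarrow> 'a set" where
  "eigenspace_of V a m mu = {v \<in> V. \<forall>w\<in>V. a v w = mu * m v w}"

definition m_proj :: "('a::real_vector \<Rightarrow> 'a \<Rightarrow> real) \<Rightarrow> 'a set \<Rightarrow> 'a \<Rightarrow> 'a" where
  "m_proj m E x = (THE p. p \<in> E \<and> (\<forall>e\<in>E. m (x - p) e = 0))"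

end

theory Submission
  imports Defs
begin

text \<open>Write \<open>w\<close> for the lifted discrete eigenfunction and \<open>p\<close> for its projection onto
  the eigenspace \<open>E\<close> of \<open>\<mu> = \<lambda>\<^sub>j\<close>. Because \<open>a(p,\<cdot>) = \<mu> m(p,\<cdot>)\<close>, the quadratic form
  \<open>a - \<mu> m\<close> does not see \<open>p\<close>: \<open>a(p-w,p-w) - \<mu> m(p-w,p-w) = a(w,w) - \<mu>\<close> when \<open>m(w,w) = 1\<close>.
  On the discrete side \<open>\<Lambda>\<^sub>j = a\<^sub>h(U,U) / m\<^sub>h(U,U)\<close>, so \<open>\<Lambda>\<^sub>j - a(w,w)\<close> is a combination of
  the two geometric consistency errors. Adding the two identities gives the estimate; only
  the fact that the projection lies in \<open>E\<close> is used, not that it is orthogonal.\<close>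

lemma sym_bilinear_on_add_left:
  "sym_bilinear_on S b \<Longrightarrow> x \<in> S \<Longrightarrow> y \<in> S \<Longrightarrow> z \<in> S \<Longrightarrow> b (x + y) z = b x z + b y z"
  unfolding sym_bilinear_on_def by blast

lemma sym_bilinear_on_scale_left:
  "sym_bilinear_on S b \<Longrightarrow> x \<in> S \<Longrightarrow> z \<in> S \<Longrightarrow> b (c *\<^sub>R x) z = c * b x z"
  unfolding sym_bilinear_on_def by blast

lemma sym_bilinear_on_commute:
  "sym_bilinear_on S b \<Longrightarrow> x \<in> S \<Longrightarrow> y \<in> S \<Longrightarrow> b x y = b y x"
  unfolding sym_bilinear_on_def by blast

lemma sym_bilinear_on_zero_left:
  assumes "subspace V" "sym_bilinear_on V b" "z \<in> V"
  shows "b 0 z = 0"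
  using sym_bilinear_on_scale_left[OF assms(2) subspace_0[OF assms(1)] assms(3), of 0] by simp

lemma sym_bilinear_on_diff_left:
  assumes V: "subspace V" and b: "sym_bilinear_on V b" and "x \<in> V" "y \<in> V" "z \<in> V"
  shows "b (x - y) z = b x z - b y z"
proof -
  have "(-1) *\<^sub>R y \<in> V" using V \<open>y \<in> V\<close> by (rule subspace_scale)
  then have "b (x + (-1) *\<^sub>R y) z = b x z + b ((-1) *\<^sub>R y) z"
    using assms by (intro sym_bilinear_on_add_left)
  also have "\<dots> = b x z - b y z"
    using sym_bilinear_on_scale_left[OF b \<open>y \<in> V\<close> \<open>z \<in> V\<close>, of "-1"] by simp
  finally show ?thesis by simp
qed

lemma sym_bilinear_on_square_diff:
  assumes V: "subspace V" and b: "sym_bilinear_on V b" and x: "x \<in> V" and y: "y \<in> V"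
  shows "b (x - y) (x - y) = b x x - 2 * b x y + b y y"
proof -
  have xy: "x - y \<in> V" using V x y by (rule subspace_diff)
  have "b (x - y) (x - y) = b (x - y) x - b (x - y) y"
    using sym_bilinear_on_diff_left[OF V b x y xy] sym_bilinear_on_commute[OF b xy] x y by simp
  also have "\<dots> = b x x - 2 * b x y + b y y"
    using sym_bilinear_on_diff_left[OF V b x y] sym_bilinear_on_commute[OF b x y] x y by simp
  finally show ?thesis .
qed

lemma sym_bilinear_on_sum_left:
  assumes V: "subspace V" and b: "sym_bilinear_on V b" and "finite F"
    and f: "\<And>n. n \<in> F \<Longrightarrow> f n \<in> V" and z: "z \<in> V"
  shows "b (\<Sum>n\<in>F. c n *\<^sub>R f n) z = (\<Sum>n\<in>F. c n * b (f n) z)"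
  using \<open>finite F\<close> f
proof (induction F rule: finite_induct)
  case empty
  then show ?case using sym_bilinear_on_zero_left[OF V b z] by simp
next
  case (insert k F)
  have "(\<Sum>n\<in>F. c n *\<^sub>R f n) \<in> V" "c k *\<^sub>R f k \<in> V"
    using insert V by (auto intro: subspace_sum subspace_scale)
  with insert show ?case
    by (simp add: sym_bilinear_on_add_left[OF b] sym_bilinear_on_scale_left[OF b] z)
qed

lemma pos_def_on_nonneg:
  assumes "subspace V" "sym_bilinear_on V b" "pos_def_on V b" "x \<in> V"
  shows "b x x \<ge> 0"
  using assms sym_bilinear_on_zero_left[OF assms(1,2) subspace_0[OF assms(1)]]
  unfolding pos_def_on_def by (cases "x = 0") (auto intro: less_imp_le)

lemma power2_bnorm: "b x x \<ge> 0 \<Longrightarrow> (bnorm b x)\<^sup>2 = b x x"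
  by (simp add: bnorm_def)

lemma subspace_orthogonal_complement_on:
  assumes V: "subspace V" and b: "sym_bilinear_on V b" and y: "y \<in> V"
  shows "subspace {e \<in> V. b y e = 0}"
  unfolding subspace_def
proof (intro conjI ballI allI)
  show "0 \<in> {e \<in> V. b y e = 0}"
    using sym_bilinear_on_zero_left[OF V b y] sym_bilinear_on_commute[OF b y] V
    by (simp add: subspace_0)
next
  fix x z assume x: "x \<in> {e \<in> V. b y e = 0}" and z: "z \<in> {e \<in> V. b y e = 0}"
  then have xz: "x + z \<in> V" using V by (simp add: subspace_add)
  have "b y (x + z) = b x y + b z y"
    using sym_bilinear_on_commute[OF b y xz] sym_bilinear_on_add_left[OF b _ _ y] x z by simp
  also have "\<dots> = 0" using sym_bilinear_on_commute[OF b _ y] x z by simp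
  finally show "x + z \<in> {e \<in> V. b y e = 0}" using xz by simp
next
  fix c x assume x: "x \<in> {e \<in> V. b y e = 0}"
  then have cx: "c *\<^sub>R x \<in> V" using V by (simp add: subspace_scale)
  have "b y (c *\<^sub>R x) = c * b x y"
    using sym_bilinear_on_commute[OF b y cx] sym_bilinear_on_scale_left[OF b _ y] x by simp
  also have "\<dots> = 0" using sym_bilinear_on_commute[OF b _ y] x by simp
  finally show "c *\<^sub>R x \<in> {e \<in> V. b y e = 0}" using cx by simp
qed

lemma subspace_eigenspace_of:
  assumes V: "subspace V" and a: "sym_bilinear_on V a" and m: "sym_bilinear_on V m"
  shows "subspace (eigenspace_of V a m mu)"
  unfolding subspace_def eigenspace_of_def
  using V sym_bilinear_on_zero_left[OF V a] sym_bilinear_on_zero_left[OF V m]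
  by (auto simp: subspace_0 subspace_add subspace_scale algebra_simps
      sym_bilinear_on_add_left[OF a] sym_bilinear_on_add_left[OF m]
      sym_bilinear_on_scale_left[OF a] sym_bilinear_on_scale_left[OF m])

lemma m_proj_eqI:
  assumes V: "subspace V" and m: "sym_bilinear_on V m" and pos: "pos_def_on V m"
    and E: "subspace E" "E \<subseteq> V" and w: "w \<in> V"
    and p: "p \<in> E" and orth: "\<forall>e\<in>E. m (w - p) e = 0"
  shows "m_proj m E w = p"
  unfolding m_proj_def
proof (rule the_equality)
  show "p \<in> E \<and> (\<forall>e\<in>E. m (w - p) e = 0)" using p orth ..
next
  fix q assume q: "q \<in> E \<and> (\<forall>e\<in>E. m (w - q) e = 0)"
  have d: "q - p \<in> E" using q p E by (simp add: subspace_diff)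
  have "m ((w - p) - (w - q)) (q - p) = m (w - p) (q - p) - m (w - q) (q - p)"
    using p q d E w V by (intro sym_bilinear_on_diff_left[OF V m]) (auto intro: subspace_diff)
  also have "\<dots> = 0" using orth q d by simp
  finally have "m (q - p) (q - p) = 0" by simp
  then show "q = p" using pos d E unfolding pos_def_on_def by force
qed

lemma m_proj_orthonormal_sum:
  assumes V: "subspace V" and m: "sym_bilinear_on V m" and pos: "pos_def_on V m"
    and "finite J" and uV: "u ` J \<subseteq> V"
    and orthonormal: "\<And>n k. n \<in> J \<Longrightarrow> k \<in> J \<Longrightarrow> m (u n) (u k) = (if n = k then 1 else 0)"
    and w: "w \<in> V"
  shows "m_proj m (span (u ` J)) w = (\<Sum>n\<in>J. m w (u n) *\<^sub>R u n)"
proof (rule m_proj_eqI[OF V m pos subspace_span])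
  define p where "p = (\<Sum>n\<in>J. m w (u n) *\<^sub>R u n)"
  show span_V: "span (u ` J) \<subseteq> V" using uV V by (rule span_minimal)
  show p_span: "p \<in> span (u ` J)" unfolding p_def by (intro span_sum span_scale span_base) auto
  have wp: "w - p \<in> V" using w p_span span_V V by (auto intro: subspace_diff)
  have "m (w - p) (u k) = 0" if k: "k \<in> J" for k
  proof -
    have "m p (u k) = (\<Sum>n\<in>J. m w (u n) * m (u n) (u k))"
      unfolding p_def using \<open>finite J\<close> uV k by (intro sym_bilinear_on_sum_left[OF V m]) auto
    also have "\<dots> = (\<Sum>n\<in>J. if n = k then m w (u k) else 0)"
      using k by (intro sum.cong) (auto simp: orthonormal)
    also have "\<dots> = m w (u k)" using \<open>finite J\<close> k by simp
    moreover have "p \<in> V" "u k \<in> V" using p_span span_V uV k by auto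
    ultimately show ?thesis using sym_bilinear_on_diff_left[OF V m w] by simp
  qed
  then have "u ` J \<subseteq> {e \<in> V. m (w - p) e = 0}" using uV by auto
  then have "span (u ` J) \<subseteq> {e \<in> V. m (w - p) e = 0}"
    by (rule span_minimal[OF _ subspace_orthogonal_complement_on[OF V m wp]])
  then show "\<forall>e\<in>span (u ` J). m (w - p) e = 0" by blast
qed (use w in auto)

lemma eigenspace_of_energy_shift:
  assumes V: "subspace V" and a: "sym_bilinear_on V a" and m: "sym_bilinear_on V m"
    and p: "p \<in> eigenspace_of V a m mu" and w: "w \<in> V"
  shows "a (p - w) (p - w) - mu * m (p - w) (p - w) = a w w - mu * m w w"
proof -
  have pV: "p \<in> V" and eig: "\<forall>z\<in>V. a p z = mu * m p z"
    using p unfolding eigenspace_of_def by auto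
  have "a (p - w) (p - w) = mu * m p p - 2 * (mu * m p w) + a w w"
    using sym_bilinear_on_square_diff[OF V a pV w] eig pV w by simp
  moreover have "mu * m (p - w) (p - w) = mu * m p p - 2 * (mu * m p w) + mu * m w w"
    unfolding sym_bilinear_on_square_diff[OF V m pV w] by (simp add: algebra_simps)
  ultimately show ?thesis by simp
qed

lemma eigenvalue_pos:
  assumes "pos_def_on S a" "pos_def_on S m" "v \<in> S" "v \<noteq> 0" "a v v = lam * m v v"
  shows "lam > 0"
  using assms unfolding pos_def_on_def by (metis zero_less_mult_pos2)

lemma eigenvalue_error_estimate:
  assumes V: "subspace V" and a: "sym_bilinear_on V a" and m: "sym_bilinear_on V m"
    and a_pos: "pos_def_on V a" and m_pos: "pos_def_on V m"
    and p: "p \<in> eigenspace_of V a m mu" and mu: "mu \<ge> 0"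
    and w: "w \<in> V" and w_norm: "m w w = 1"
    and Lam: "Lam \<ge> 0" and A: "A = Lam * B"
  shows "\<bar>mu - Lam\<bar>
      \<le> (bnorm a (p - w))\<^sup>2 + mu * (bnorm m (p - w))\<^sup>2 + \<bar>A - a w w\<bar> + Lam * \<bar>B - m w w\<bar>"
proof -
  have "p \<in> V" using p unfolding eigenspace_of_def by blast
  with V w have pw: "p - w \<in> V" by (intro subspace_diff)
  have ax: "a (p - w) (p - w) \<ge> 0" and mx: "m (p - w) (p - w) \<ge> 0"
    using pos_def_on_nonneg[OF V a a_pos pw] pos_def_on_nonneg[OF V m m_pos pw] .
  then have "(bnorm a (p - w))\<^sup>2 = a (p - w) (p - w)" "(bnorm m (p - w))\<^sup>2 = m (p - w) (p - w)"
    by (simp_all add: power2_bnorm)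
  moreover have "mu * m (p - w) (p - w) \<ge> 0" using mu mx by simp
  moreover have "A - Lam = Lam * (B - 1)" using A by (simp add: algebra_simps)
  then have "Lam * \<bar>B - 1\<bar> = \<bar>A - Lam\<bar>" using Lam by (simp add: abs_mult)
  moreover have "mu - Lam = mu * m (p - w) (p - w) - a (p - w) (p - w) - (A - a w w) + (A - Lam)"
    using eigenspace_of_energy_shift[OF V a m p w] w_norm by simp
  ultimately show ?thesis
    using ax w_norm by (simp add: abs_le_iff) linarith
qed

theorem mainTheorem6:
  fixes V :: "'v::real_vector set"
    and a m :: "'v \<Rightarrow> 'v \<Rightarrow> real"
    and lam :: "nat \<Rightarrow> real" and u :: "nat \<Rightarrow> 'v"
    and Wh Vh :: "'w::real_vector set"
    and ah mh :: "'w \<Rightarrow> 'w \<Rightarrow> real"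
    and Lam :: "nat \<Rightarrow> real" and Ud :: "nat \<Rightarrow> 'w" and M :: nat
    and T :: "'v \<Rightarrow> 'w" and L :: "'w \<Rightarrow> 'v"
    and i N j :: nat and U :: 'w
  assumes V_sub: "subspace V"
    and a_bil: "sym_bilinear_on V a" and m_bil: "sym_bilinear_on V m"
    and a_pos: "pos_def_on V a" and m_pos: "pos_def_on V m"
    and cont_eig: "\<And>n. u n \<in> V \<and> (\<forall>w\<in>V. a (u n) w = lam n * m (u n) w)"
    and cont_orth: "\<And>n k. m (u n) (u k) = (if n = k then 1 else 0)"
    and cont_complete: "\<And>mu. eigenspace_of V a m mu \<subseteq> span (u ` {n. lam n = mu})"
    and lam_mono: "mono lam"
    and N_pos: "N \<ge> 1"
    and multiplicity: "{n. lam n = lam i} = {i..<i + N}"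
    and j_in_J: "j \<in> {i..<i + N}"
    and Wh_sub: "subspace Wh" and Vh_sub: "subspace Vh" and Vh_Wh: "Vh \<subseteq> Wh"
    and ah_bil: "sym_bilinear_on Wh ah" and mh_bil: "sym_bilinear_on Wh mh"
    and ah_pos: "pos_def_on Wh ah" and mh_pos: "pos_def_on Wh mh"
    and dimVh: "dim Vh = M"
    and disc_eig: "\<And>p. p < M \<Longrightarrow> Ud p \<in> Vh \<and> (\<forall>W\<in>Vh. ah (Ud p) W = Lam p * mh (Ud p) W)"
    and disc_orth: "\<And>p q. p < M \<Longrightarrow> q < M \<Longrightarrow> mh (Ud p) (Ud q) = (if p = q then 1 else 0)"
    and disc_span: "span (Ud ` {..<M}) = Vh"
    and Lam_mono: "mono_on {..<M} Lam"
    and T_maps: "T ` V \<subseteq> Wh"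
    and T_lin: "\<And>x y c. x \<in> V \<Longrightarrow> y \<in> V \<Longrightarrow> T (x + y) = T x + T y \<and> T (c *\<^sub>R x) = c *\<^sub>R T x"
    and L_maps: "L ` Vh \<subseteq> V"
    and L_lin: "\<And>x y c. x \<in> Vh \<Longrightarrow> y \<in> Vh \<Longrightarrow> L (x + y) = L x + L y \<and> L (c *\<^sub>R x) = c *\<^sub>R L x"
    and lift: "\<And>W. W \<in> Vh \<Longrightarrow> T (L W) = W"
    and j_disc: "j < M"
    and U_in: "U \<in> Vh" and U_eig: "\<forall>W\<in>Vh. ah U W = Lam j * mh U W"
    and U_norm: "bnorm m (L U) = 1"
  shows "\<bar>lam j - Lam j\<bar>
      \<le> (bnorm a (m_proj m (eigenspace_of V a m (lam i)) (L U) - L U))\<^sup>2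
       + lam j * (bnorm m (m_proj m (eigenspace_of V a m (lam i)) (L U) - L U))\<^sup>2
       + \<bar>ah (T (L U)) (T (L U)) - a (L U) (L U)\<bar>
       + Lam j * \<bar>mh (T (L U)) (T (L U)) - m (L U) (L U)\<bar>"
proof -
  define w where "w = L U"
  define E where "E = eigenspace_of V a m (lam i)"
  have w: "w \<in> V" using L_maps U_in unfolding w_def by auto
  have w_norm: "m w w = 1" using U_norm unfolding w_def bnorm_def by simp
  have lam_j: "lam j = lam i" using multiplicity j_in_J by blast
  have E_span: "E = span (u ` {i..<i + N})"
  proof
    show "E \<subseteq> span (u ` {i..<i + N})" using cont_complete multiplicity unfolding E_def by metis
    have "u ` {i..<i + N} \<subseteq> E"
      using cont_eig multiplicity unfolding E_def eigenspace_of_def by auto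
    then show "span (u ` {i..<i + N}) \<subseteq> E"
      using span_minimal subspace_eigenspace_of[OF V_sub a_bil m_bil] unfolding E_def by blast
  qed
  have "m_proj m E w \<in> E"
    unfolding E_span using cont_eig cont_orth w
    by (subst m_proj_orthonormal_sum[OF V_sub m_bil m_pos]) (auto intro: span_sum span_scale span_base)
  moreover have "lam j > 0"
  proof (rule eigenvalue_pos[OF a_pos m_pos])
    show "u j \<in> V" using cont_eig by blast
    show "u j \<noteq> 0"
      using cont_orth[of j j] sym_bilinear_on_zero_left[OF V_sub m_bil subspace_0[OF V_sub]] by auto
    show "a (u j) (u j) = lam j * m (u j) (u j)" using cont_eig by blast
  qed
  moreover have "Lam j > 0"
  proof (rule eigenvalue_pos[OF ah_pos mh_pos])
    show "U \<in> Wh" using U_in Vh_Wh by blast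
    show "U \<noteq> 0"
      using L_lin[OF U_in U_in, of 0] w_norm sym_bilinear_on_zero_left[OF V_sub m_bil w]
      unfolding w_def by auto
    show "ah U U = Lam j * mh U U" using U_eig U_in by blast
  qed
  ultimately show ?thesis
    using eigenvalue_error_estimate[OF V_sub a_bil m_bil a_pos m_pos, of _ "lam i" w "Lam j"]
      w w_norm lam_j lift[OF U_in] U_eig U_in unfolding E_def w_def by auto
qed

end
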